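(* Let $q\ge1$ and assume Hypothesis (H$_q$). Then for every $\theta>0$, $$\Big|\frac16\Big[f(ma)+4f\Big(\frac{m(a+b)}{2}\Big)+f(mb)\Big]-\frac{\Gamma(\theta+1)2^{\theta-1}}{m^\theta(b-a)^\theta}\Big[J^\theta_{(\frac{m(a+b)}{2})^-}f(ma)+J^\theta_{(\frac{m(a+b)}{2})^+}f(mb)\Big]\Big|$$ $$\le\frac{m(b-a)}{4}A_1\big(\theta,\tfrac13\big)^{1-\frac1q}\Big\{\Big(\Big|f'\Big(\frac{m(a+b)}2\Big)\Big|^qA_2\big(\alpha,\theta,\tfrac13\big)+m|f'(a)|^qA_3\big(\alpha,\theta,\tfrac13\big)\Big)^{\frac1q}+\Big(\Big|f'\Big(\frac{m(a+b)}2\Big)\Big|^qA_2\big(\alpha,\theta,\tfrac13\big)+m|f'(b)|^qA_3\big(\alpha,\theta,\tfrac13\big)\Big)^{\frac1q}\Big\}.$$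
   Context: Let $\Gamma$ denote Euler's Gamma function. For $\theta>0$, $c=\frac{m(a+b)}{2}$: $J^\theta_{c^-}f(ma)=\frac{1}{\Gamma(\theta)}\int_{ma}^{c}(s-ma)^{\theta-1}f(s)\,ds$ and $J^\theta_{c^+}f(mb)=\frac{1}{\Gamma(\theta)}\int_{c}^{mb}(mb-s)^{\theta-1}f(s)\,ds$. $(\alpha,m)$-convexity: for $(\alpha,m)\in[0,1]\times(0,1]$ and an interval $K\subseteq[0,\infty)$, a function $g:K\to\mathbb{R}$ is $(\alpha,m)$-convex on $K$ if $g(tX+m(1-t)Y)\le t^\alpha g(X)+m(1-t^\alpha)g(Y)$ for all $X,Y\in K$ and $t\in[0,1]$ with $tX+m(1-t)Y\in K$ (convention $0^0=1$). Hypothesis (H$_q$): $I\subseteq[0,\infty)$ is an interval, $f:I\to\mathbb{R}$ is differentiable on the interior $I^\circ$, $m\in(0,1]$, $\alpha\in[0,1]$, $a<b$ with $ma,b\in I^\circ$, $f'$ is Lebesgue integrable on $[ma,mb]$, and $|f'|^q$ is $(\alpha,m)$-convex on $[ma,b]$. Constants: $A_1(\theta,\lambda)=\frac{2\theta\lambda^{1+\frac1\theta}+1}{\theta+1}-\lambda$, $A_2(\alpha,\theta,\lambda)=\frac{2\theta\lambda^{1+\frac{1+\alpha}{\theta}}}{(\alpha+1)(\alpha+\theta+1)}+\frac{1}{\alpha+\theta+1}-\frac{\lambda}{\alpha+1}$, $A_3(\alpha,\theta,\lambda)=A_1(\theta,\lambda)-A_2(\alpha,\theta,\lambda)$. *)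

theory Defs
  imports "HOL-Analysis.Analysis"
begin

text \<open>Real power with the convention 0^0 = 1 (Isabelle's powr has 0 powr x = 0).\<close>
definition cpow :: "real \<Rightarrow> real \<Rightarrow> real" where
  "cpow t a = (if t = 0 then (if a = 0 then 1 else 0) else t powr a)"

definition alpha_m_convex :: "real \<Rightarrow> real \<Rightarrow> real set \<Rightarrow> (real \<Rightarrow> real) \<Rightarrow> bool" where
  "alpha_m_convex \<alpha> m K g \<longleftrightarrow>
     (\<forall>X\<in>K. \<forall>Y\<in>K. \<forall>t\<in>{0..1}. t * X + m * (1 - t) * Y \<in> K \<longrightarrow>
        g (t * X + m * (1 - t) * Y) \<le> cpow t \<alpha> * g X + m * (1 - cpow t \<alpha>) * g Y)"

definition RL_left :: "real \<Rightarrow> real \<Rightarrow> (real \<Rightarrow> real) \<Rightarrow> real \<Rightarrow> real" where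
  "RL_left \<theta> c f x = (1 / Gamma \<theta>) * (LINT s:{x..c}|lborel. (s - x) powr (\<theta> - 1) * f s)"

definition RL_right :: "real \<Rightarrow> real \<Rightarrow> (real \<Rightarrow> real) \<Rightarrow> real \<Rightarrow> real" where
  "RL_right \<theta> c f x = (1 / Gamma \<theta>) * (LINT s:{c..x}|lborel. (x - s) powr (\<theta> - 1) * f s)"

definition A1 :: "real \<Rightarrow> real \<Rightarrow> real" where
  "A1 \<theta> lam = (2 * \<theta> * lam powr (1 + 1 / \<theta>) + 1) / (\<theta> + 1) - lam"

definition A2 :: "real \<Rightarrow> real \<Rightarrow> real \<Rightarrow> real" where
  "A2 \<alpha> \<theta> lam = 2 * \<theta> * lam powr (1 + (1 + \<alpha>) / \<theta>) / ((\<alpha> + 1) * (\<alpha> + \<theta> + 1))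
      + 1 / (\<alpha> + \<theta> + 1) - lam / (\<alpha> + 1)"

definition A3 :: "real \<Rightarrow> real \<Rightarrow> real \<Rightarrow> real" where
  "A3 \<alpha> \<theta> lam = A1 \<theta> lam - A2 \<alpha> \<theta> lam"

end

theory Submission
  imports Defs
begin

text \<open>
  Substituting s = m a + t h and s = m b - t h, with h = m (b - a) / 2, turns both
  Riemann--Liouville integrals into integrals over [0, 1], and the left-hand side becomes the mean
  of two defects (1 - \<lambda>) g(1) + \<lambda> g(0) - \<theta> \<integral>[0,1] t^(\<theta>-1) g(t) dt with \<lambda> = 1/3,
  g being f along the segment from m a, resp. m b, to the midpoint.  Integration by parts
  writes such a defect as \<integral>[0,1] (t^\<theta> - \<lambda>) g'(t) dt.  The (\<alpha>,m)-convexity of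
  |f'|^q bounds |g'(t)|^q by t^\<alpha> P + m (1 - t^\<alpha>) Q, and the power-mean inequality for the
  weight |t^\<theta> - \<lambda>|, whose integrals against 1 and t^\<alpha> are A1 and A2, gives the bound.
\<close>

lemma Young_tangent_bound:
  fixes x l q :: real
  assumes "0 \<le> x" "0 < l" "1 \<le> q"
  shows "x \<le> l * (1 - 1/q) + (1/q) * l powr (1 - q) * x powr q"
proof (cases "q = 1 \<or> x = 0")
  case True
  then show ?thesis using assms by auto
next
  case False
  then have q: "q > 1" and x: "x > 0" using assms by auto
  have "l powr (1 - 1/q) * (l powr (1 - q) * x powr q) powr (1/q)
        \<le> (1 - 1/q) * l + (1/q) * (l powr (1 - q) * x powr q)"
    using q x assms by (intro Youngs_inequality_0) auto
  moreover have "l powr (1 - 1/q) * (l powr (1 - q) * x powr q) powr (1/q) = x"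
  proof -
    have "l powr (1 - 1/q) * (l powr (1 - q) * x powr q) powr (1/q)
        = l powr ((1 - 1/q) + (1 - q)/q) * x"
      using q x assms by (simp add: powr_mult powr_powr powr_add)
    also have "(1 - 1/q) + (1 - q)/q = 0" using q by (simp add: field_simps)
    finally show ?thesis using assms by simp
  qed
  ultimately show ?thesis by (simp add: algebra_simps)
qed

lemma le_Young_optimum:
  fixes E A S q :: real
  assumes A: "0 < A" and S: "0 \<le> S" and q: "1 \<le> q"
    and bound: "\<And>l. 0 < l \<Longrightarrow> E \<le> l * (1 - 1/q) * A + (1/q) * l powr (1 - q) * S"
  shows "E \<le> A powr (1 - 1/q) * S powr (1/q)"
proof (cases "S = 0")
  case True
  show ?thesis
  proof (rule ccontr)
    assume "\<not> ?thesis"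
    then have E: "0 < E" using True by simp
    define l where "l = E / (A + 1)"
    have l: "0 < l" using E A unfolding l_def by simp
    have "l * (1 - 1/q) * A \<le> l * A"
      using l A q by (intro mult_right_mono mult_left_mono) auto
    also have "\<dots> < E" unfolding l_def using A E by (simp add: field_simps)
    finally show False using bound[OF l] True by simp
  qed
next
  case False
  then have S: "0 < S" using S by simp
  define l where "l = (S / A) powr (1/q)"
  have l: "0 < l" unfolding l_def using S A by simp
  have "l * A = A powr (1 - 1/q) * S powr (1/q)"
    unfolding l_def using S A by (simp add: powr_divide powr_diff)
  moreover have "l powr (1 - q) * S = A powr (1 - 1/q) * S powr (1/q)"
  proof -
    have "l powr (1 - q) * S = S powr ((1 - q)/q + 1) * A powr (- ((1 - q)/q))"
      unfolding l_def using S A by (simp add: powr_powr powr_divide powr_add powr_minus_divide)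
    moreover have "(1 - q)/q + 1 = 1/q" "- ((1 - q)/q) = 1 - 1/q" using q by (simp_all add: field_simps)
    ultimately show ?thesis by (simp add: mult.commute)
  qed
  ultimately have "l * (1 - 1/q) * A + (1/q) * l powr (1 - q) * S = A powr (1 - 1/q) * S powr (1/q)"
    by (simp add: algebra_simps)
  then show ?thesis using bound[OF l] by simp
qed

lemma has_integral_abs_powr_diff_mult_powr:
  fixes \<theta> \<beta> lam :: real
  assumes \<theta>: "0 < \<theta>" and \<beta>: "0 \<le> \<beta>" and lam: "0 < lam" "lam \<le> 1"
  shows "((\<lambda>t. \<bar>t powr \<theta> - lam\<bar> * t powr \<beta>) has_integral A2 \<beta> \<theta> lam) {0..1}"
proof -
  define \<mu> where "\<mu> = lam powr (1/\<theta>)"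
  have \<mu>: "0 < \<mu>" "\<mu> \<le> 1" unfolding \<mu>_def using \<theta> lam by (auto intro: powr_le1)
  have \<mu>_powr: "\<mu> powr \<theta> = lam" unfolding \<mu>_def using \<theta> lam by (simp add: powr_powr)
  define G where "G t = lam * t powr (\<beta>+1) / (\<beta>+1) - t powr (\<theta>+\<beta>+1) / (\<theta>+\<beta>+1)" for t :: real
  have left: "((\<lambda>t. \<bar>t powr \<theta> - lam\<bar> * t powr \<beta>) has_integral G \<mu> - G 0) {0..\<mu>}"
  proof (rule has_integral_spike_finite[OF _ _ fundamental_theorem_of_calculus_interior])
    show "continuous_on {0..\<mu>} G" unfolding G_def using \<theta> \<beta>
      by (intro continuous_intros continuous_on_powr') auto
    fix t assume t: "t \<in> {0<..<\<mu>}"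
    show "(G has_vector_derivative lam * t powr \<beta> - t powr (\<theta>+\<beta>)) (at t)"
      unfolding G_def using t \<theta> \<beta>
      by (auto intro!: derivative_eq_intros simp flip: has_real_derivative_iff_has_vector_derivative
               simp: divide_simps) (simp_all add: algebra_simps)
  next
    fix t assume t: "t \<in> {0..\<mu>} - {0}"
    then have "t powr \<theta> \<le> lam" using \<theta> \<mu>_powr by (metis Diff_iff atLeastAtMost_iff powr_mono2 less_imp_le)
    then show "\<bar>t powr \<theta> - lam\<bar> * t powr \<beta> = lam * t powr \<beta> - t powr (\<theta>+\<beta>)"
      by (simp add: powr_add algebra_simps)
  qed (use \<mu> in auto)
  have right: "((\<lambda>t. \<bar>t powr \<theta> - lam\<bar> * t powr \<beta>) has_integral (- G 1) - (- G \<mu>)) {\<mu>..1}"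
  proof (rule has_integral_eq[rotated, OF fundamental_theorem_of_calculus_interior])
    show "continuous_on {\<mu>..1} (\<lambda>t. - G t)" unfolding G_def using \<theta> \<beta> \<mu>
      by (intro continuous_intros continuous_on_powr') auto
    fix t assume t: "t \<in> {\<mu><..<1}"
    then have "t > 0" using \<mu> by simp
    then show "((\<lambda>t. - G t) has_vector_derivative t powr (\<theta>+\<beta>) - lam * t powr \<beta>) (at t)"
      unfolding G_def using \<theta> \<beta>
      by (auto intro!: derivative_eq_intros simp flip: has_real_derivative_iff_has_vector_derivative
               simp: divide_simps) (simp_all add: algebra_simps)
  next
    fix t assume t: "t \<in> {\<mu>..1}"
    then have "lam \<le> t powr \<theta>" using \<theta> \<mu> \<mu>_powr by (auto intro!: powr_mono2)
    then show "t powr (\<theta>+\<beta>) - lam * t powr \<beta> = \<bar>t powr \<theta> - lam\<bar> * t powr \<beta>"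
      using t \<mu> by (simp add: powr_add algebra_simps)
  qed (use \<mu> in auto)
  have "((\<lambda>t. \<bar>t powr \<theta> - lam\<bar> * t powr \<beta>) has_integral 2 * G \<mu> - G 0 - G 1) {0..1}"
    using has_integral_combine[OF _ _ left right] \<mu> by (simp add: algebra_simps)
  moreover have "2 * G \<mu> - G 0 - G 1 = A2 \<beta> \<theta> lam"
  proof -
    define R where "R = lam powr ((1+\<beta>)/\<theta>)"
    have "\<mu> powr (\<beta>+1) = R"
      unfolding \<mu>_def R_def by (simp add: powr_powr add.commute)
    then have "\<mu> powr (\<theta>+\<beta>+1) = lam * R"
      using \<mu>_powr by (simp add: powr_add add.assoc)
    then have "G \<mu> = \<theta> * (lam * R) / ((\<beta>+1) * (\<beta>+\<theta>+1))"
      unfolding G_def \<open>\<mu> powr (\<beta>+1) = R\<close> using \<theta> \<beta> by (simp add: field_simps)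
    moreover have "G 0 = 0" "G 1 = lam / (\<beta>+1) - 1 / (\<beta>+\<theta>+1)"
      unfolding G_def using \<theta> \<beta> by (simp_all add: add_ac)
    moreover have "lam powr (1 + (1+\<beta>)/\<theta>) = lam * R"
      unfolding R_def using lam by (simp add: powr_add)
    ultimately show ?thesis unfolding A2_def by (simp add: add_ac)
  qed
  ultimately show ?thesis by simp
qed

lemma A1_eq_A2_0: "A1 \<theta> lam = A2 0 \<theta> lam"
  unfolding A1_def A2_def by (simp add: add_divide_distrib add.commute)

lemma has_integral_abs_powr_diff:
  fixes \<theta> lam :: real
  assumes "0 < \<theta>" "0 < lam" "lam \<le> 1"
  shows "((\<lambda>t. \<bar>t powr \<theta> - lam\<bar>) has_integral A1 \<theta> lam) {0..1}"
proof (rule has_integral_spike_finite[of "{0}"])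
  show "((\<lambda>t. \<bar>t powr \<theta> - lam\<bar> * t powr 0) has_integral A1 \<theta> lam) {0..1}"
    unfolding A1_eq_A2_0 using assms by (intro has_integral_abs_powr_diff_mult_powr) auto
qed auto

lemma A1_pos:
  fixes \<theta> lam :: real
  assumes "0 < \<theta>" "0 < lam" "lam \<le> 1"
  shows "0 < A1 \<theta> lam"
proof -
  have int: "((\<lambda>t. \<bar>t powr \<theta> - lam\<bar>) has_integral A1 \<theta> lam) (cbox 0 1)"
    using has_integral_abs_powr_diff[OF assms] by simp
  have cont: "continuous_on (cbox 0 1) (\<lambda>t::real. \<bar>t powr \<theta> - lam\<bar>)"
    using assms by (intro continuous_intros continuous_on_powr') auto
  have "A1 \<theta> lam \<ge> 0" by (rule has_integral_nonneg[OF int]) simp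
  moreover have "A1 \<theta> lam \<noteq> 0"
  proof
    assume "A1 \<theta> lam = 0"
    then have "\<forall>t\<in>{0..1}. t powr \<theta> = lam"
      using integral_cbox_eq_0_iff[OF cont] int by (simp add: integral_unique)
    then show False using assms by force
  qed
  ultimately show ?thesis by simp
qed

lemma set_integrable_powr_mult_continuous:
  fixes g :: "real \<Rightarrow> real" and \<theta> :: real
  assumes \<theta>: "0 < \<theta>" and g: "continuous_on {0..1} g"
  shows "set_integrable lborel {0..1} (\<lambda>t. t powr (\<theta> - 1) * g t)"
proof -
  have w: "(\<lambda>t. t powr (\<theta> - 1)) absolutely_integrable_on {0..1}"
    using has_integral_powr_from_0[of "\<theta> - 1" 1] \<theta>
    by (intro nonnegative_absolutely_integrable_1) (auto simp: integrable_on_def)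
  have "(\<lambda>t. g t * t powr (\<theta> - 1)) absolutely_integrable_on {0..1}"
  proof (rule absolutely_integrable_bounded_measurable_product_real[OF _ _ _ w])
    show "g \<in> borel_measurable (lebesgue_on {0..1})"
      by (rule continuous_imp_measurable_on_sets_lebesgue[OF g]) simp
    show "bounded (g ` {0..1})"
      by (intro compact_imp_bounded compact_continuous_image g) simp
  qed simp
  moreover have "(\<lambda>t. indicator {0..1} t *\<^sub>R (t powr (\<theta> - 1) * g t)) \<in> borel_measurable lborel"
  proof -
    have [measurable]: "(\<lambda>t. indicator {0..1} t *\<^sub>R g t) \<in> borel_measurable lborel"
      using borel_measurable_continuous_on_indicator[OF _ g] by simp
    have "(\<lambda>t. t powr (\<theta> - 1) * (indicator {0..1} t *\<^sub>R g t)) \<in> borel_measurable lborel"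
      by measurable
    then show ?thesis by (simp add: ac_simps)
  qed
  ultimately show ?thesis
    unfolding set_integrable_def by (simp add: integrable_completion mult.commute)
qed

lemma has_integral_powr_diff_mult_deriv:
  fixes g D :: "real \<Rightarrow> real" and \<theta> lam :: real
  assumes \<theta>: "0 < \<theta>" and g: "continuous_on {0..1} g"
    and D: "\<And>t. t \<in> {0<..<1} \<Longrightarrow> (g has_real_derivative D t) (at t)"
  shows "((\<lambda>t. (t powr \<theta> - lam) * D t) has_integral
           (1 - lam) * g 1 + lam * g 0 - \<theta> * integral {0..1} (\<lambda>t. t powr (\<theta> - 1) * g t)) {0..1}"
proof -
  have "(\<lambda>t. t powr (\<theta> - 1) * g t) integrable_on {0..1}"
    using set_borel_integral_eq_integral(1)[OF set_integrable_powr_mult_continuous[OF \<theta> g]] .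
  then have frac: "((\<lambda>t. \<theta> * (t powr (\<theta> - 1) * g t))
                     has_integral \<theta> * integral {0..1} (\<lambda>t. t powr (\<theta> - 1) * g t)) {0..1}"
    by (intro has_integral_mult_right integrable_integral)
  have "((\<lambda>t. \<theta> * (t powr (\<theta> - 1) * g t) + (t powr \<theta> - lam) * D t)
          has_integral (1 powr \<theta> - lam) * g 1 - (0 powr \<theta> - lam) * g 0) {0..1}"
  proof (rule fundamental_theorem_of_calculus_interior)
    show "continuous_on {0..1} (\<lambda>t. (t powr \<theta> - lam) * g t)" using \<theta> g
      by (intro continuous_intros continuous_on_powr') auto
    fix t :: real assume t: "t \<in> {0<..<1}"
    show "((\<lambda>t. (t powr \<theta> - lam) * g t) has_vector_derivative
            \<theta> * (t powr (\<theta> - 1) * g t) + (t powr \<theta> - lam) * D t) (at t)"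
      unfolding has_real_derivative_iff_has_vector_derivative[symmetric]
      using t D[OF t] by (auto intro!: derivative_eq_intros simp: algebra_simps)
  qed simp
  from has_integral_diff[OF this frac] show ?thesis by (simp add: algebra_simps)
qed

lemma has_integral_abs_le_power_mean:
  fixes \<phi> w F G :: "'a::euclidean_space \<Rightarrow> real" and S :: "'a set" and E A C q :: real
  assumes \<phi>: "(\<phi> has_integral E) S" and w: "(w has_integral A) S"
    and wG: "((\<lambda>x. w x * G x) has_integral C) S" and A: "0 < A" and q: "1 \<le> q"
    and \<phi>_le: "\<And>x. x \<in> S \<Longrightarrow> \<bar>\<phi> x\<bar> \<le> w x * F x"
    and w_nonneg: "\<And>x. x \<in> S \<Longrightarrow> 0 \<le> w x" and F_nonneg: "\<And>x. x \<in> S \<Longrightarrow> 0 \<le> F x"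
    and F_powr_le: "\<And>x. x \<in> S \<Longrightarrow> F x powr q \<le> G x"
  shows "\<bar>E\<bar> \<le> A powr (1 - 1/q) * C powr (1/q)"
proof (rule le_Young_optimum[OF A _ q])
  show "0 \<le> C"
    using w_nonneg F_powr_le
    by (intro has_integral_nonneg[OF wG]) (meson mult_nonneg_nonneg order_trans powr_ge_zero)
  \<comment> \<open>Hoelder's inequality in disguise: F is bounded by the tangent line of Young's inequality at l,
    integrated against w, and the bound is then optimised over l; F itself need not be integrable.\<close>
  fix l :: real assume l: "0 < l"
  have bound: "((\<lambda>x. l * (1 - 1/q) * w x + (1/q) * l powr (1 - q) * (w x * G x))
                 has_integral l * (1 - 1/q) * A + (1/q) * l powr (1 - q) * C) S"
    by (intro has_integral_add has_integral_mult_right w wG)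
  have "\<bar>\<phi> x\<bar> \<le> l * (1 - 1/q) * w x + (1/q) * l powr (1 - q) * (w x * G x)" if x: "x \<in> S" for x
  proof -
    have "(1/q) * l powr (1 - q) * F x powr q \<le> (1/q) * l powr (1 - q) * G x"
      using F_powr_le[OF x] q by (intro mult_left_mono) auto
    then have "F x \<le> l * (1 - 1/q) + (1/q) * l powr (1 - q) * G x"
      using Young_tangent_bound[OF F_nonneg[OF x] l q] by linarith
    then have "w x * F x \<le> w x * (l * (1 - 1/q) + (1/q) * l powr (1 - q) * G x)"
      using w_nonneg[OF x] by (rule mult_left_mono)
    then show ?thesis using \<phi>_le[OF x] by (simp add: algebra_simps)
  qed
  then show "\<bar>E\<bar> \<le> l * (1 - 1/q) * A + (1/q) * l powr (1 - q) * C"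
    using has_integral_le[OF \<phi> bound] has_integral_le[OF has_integral_neg[OF \<phi>] bound]
    by (auto simp: abs_le_iff)
qed

lemma fractional_kernel_estimate:
  fixes g D F :: "real \<Rightarrow> real" and \<theta> q \<alpha> m P Q h lam :: real
  assumes \<theta>: "0 < \<theta>" and q: "1 \<le> q" and \<alpha>: "0 \<le> \<alpha>" and m: "0 \<le> m"
    and P: "0 \<le> P" and Q: "0 \<le> Q" and h: "0 < h" and lam: "0 < lam" "lam \<le> 1"
    and g: "continuous_on {0..1} g"
    and D: "\<And>t. t \<in> {0<..<1} \<Longrightarrow> (g has_real_derivative D t) (at t)"
    and D_le: "\<And>t. t \<in> {0<..<1} \<Longrightarrow> \<bar>D t\<bar> \<le> h * F t"
    and F_nonneg: "\<And>t. t \<in> {0<..<1} \<Longrightarrow> 0 \<le> F t"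
    and F_powr_le: "\<And>t. t \<in> {0<..<1} \<Longrightarrow> F t powr q \<le> t powr \<alpha> * P + m * (1 - t powr \<alpha>) * Q"
  shows "\<bar>(1 - lam) * g 1 + lam * g 0 - \<theta> * integral {0..1} (\<lambda>t. t powr (\<theta> - 1) * g t)\<bar>
         \<le> h * A1 \<theta> lam powr (1 - 1/q) * (P * A2 \<alpha> \<theta> lam + m * Q * A3 \<alpha> \<theta> lam) powr (1/q)"
proof -
  define A where "A = A1 \<theta> lam"
  define B where "B = A2 \<alpha> \<theta> lam"
  have IA: "((\<lambda>t. \<bar>t powr \<theta> - lam\<bar>) has_integral A) {0<..<1}"
    unfolding A_def has_integral_Icc_iff_Ioo[symmetric] using has_integral_abs_powr_diff \<theta> lam by blast
  have IB: "((\<lambda>t. \<bar>t powr \<theta> - lam\<bar> * t powr \<alpha>) has_integral B) {0<..<1}"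
    unfolding B_def has_integral_Icc_iff_Ioo[symmetric] using has_integral_abs_powr_diff_mult_powr \<theta> \<alpha> lam
    by blast
  have "\<bar>(1 - lam) * g 1 + lam * g 0 - \<theta> * integral {0..1} (\<lambda>t. t powr (\<theta> - 1) * g t)\<bar>
      \<le> (h * A) powr (1 - 1/q) * (h * (P * B + m * Q * (A - B))) powr (1/q)"
  proof (rule has_integral_abs_le_power_mean[OF _ has_integral_mult_right[OF IA] _ _ q,
        where F = F and G = "\<lambda>t. t powr \<alpha> * P + m * (1 - t powr \<alpha>) * Q"])
    show "((\<lambda>t. (t powr \<theta> - lam) * D t) has_integral
           (1 - lam) * g 1 + lam * g 0 - \<theta> * integral {0..1} (\<lambda>t. t powr (\<theta> - 1) * g t)) {0<..<1}"
      using has_integral_powr_diff_mult_deriv[OF \<theta> g D] by (simp add: has_integral_Icc_iff_Ioo)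
    show "((\<lambda>t. h * \<bar>t powr \<theta> - lam\<bar> * (t powr \<alpha> * P + m * (1 - t powr \<alpha>) * Q))
            has_integral h * (P * B + m * Q * (A - B))) {0<..<1}"
      using has_integral_mult_right[OF has_integral_add[OF has_integral_mult_right[OF IB, of "P - m * Q"]
            has_integral_mult_right[OF IA, of "m * Q"]], of h]
      by (simp add: algebra_simps)
    show "0 < h * A" using h A1_pos[OF \<theta> lam] unfolding A_def by simp
    fix t :: real assume t: "t \<in> {0<..<1}"
    show "\<bar>(t powr \<theta> - lam) * D t\<bar> \<le> h * \<bar>t powr \<theta> - lam\<bar> * F t"
      using mult_left_mono[OF D_le[OF t], of "\<bar>t powr \<theta> - lam\<bar>"] by (simp add: abs_mult mult_ac)
  qed (use F_nonneg F_powr_le h in auto)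
  also have "\<dots> = h * A powr (1 - 1/q) * (P * B + m * Q * (A - B)) powr (1/q)"
    using h by (simp add: powr_mult powr_add[symmetric])
  finally show ?thesis unfolding A_def B_def A3_def .
qed

lemma RL_left_eq_integral_unit:
  fixes f :: "real \<Rightarrow> real" and x0 h \<theta> :: real
  assumes h: "0 < h" and \<theta>: "0 < \<theta>" and f: "continuous_on {x0..x0+h} f"
  shows "RL_left \<theta> (x0 + h) f x0
           = h powr \<theta> / Gamma \<theta> * integral {0..1} (\<lambda>t. t powr (\<theta> - 1) * f (x0 + t * h))"
proof -
  have "continuous_on {0..1} (\<lambda>t. f (x0 + t * h))"
    using h by (intro continuous_on_compose2[OF f] continuous_intros)
               (auto simp: mult_left_le_one_le)
  from set_integrable_powr_mult_continuous[OF \<theta> this]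
  have unit: "(LINT t:{0..1}|lborel. t powr (\<theta> - 1) * f (x0 + t * h))
                = integral {0..1} (\<lambda>t. t powr (\<theta> - 1) * f (x0 + t * h))"
    by (rule set_borel_integral_eq_integral)
  have pointwise: "indicator {x0..x0+h} (x0 + h * t) *\<^sub>R ((x0 + h * t - x0) powr (\<theta> - 1) * f (x0 + h * t))
          = h powr (\<theta> - 1) * (indicator {0..1} t *\<^sub>R (t powr (\<theta> - 1) * f (x0 + t * h)))" for t
    using h by (auto simp: indicator_def powr_mult mult.commute zero_le_mult_iff mult_le_cancel_left1)
  have "(LINT s:{x0..x0+h}|lborel. (s - x0) powr (\<theta> - 1) * f s)
          = \<bar>h\<bar> *\<^sub>R (LBINT t. indicator {x0..x0+h} (x0 + h * t) *\<^sub>R ((x0 + h * t - x0) powr (\<theta> - 1) * f (x0 + h * t)))"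
    unfolding set_lebesgue_integral_def by (rule lborel_integral_real_affine) (use h in simp)
  also have "\<dots> = h * h powr (\<theta> - 1) * (LINT t:{0..1}|lborel. t powr (\<theta> - 1) * f (x0 + t * h))"
    unfolding pointwise set_lebesgue_integral_def using h by simp
  also have "h * h powr (\<theta> - 1) = h powr \<theta>" using h by (simp add: powr_diff)
  finally show ?thesis unfolding RL_left_def unit by simp
qed

lemma RL_right_eq_integral_unit:
  fixes f :: "real \<Rightarrow> real" and x1 h \<theta> :: real
  assumes h: "0 < h" and \<theta>: "0 < \<theta>" and f: "continuous_on {x1-h..x1} f"
  shows "RL_right \<theta> (x1 - h) f x1
           = h powr \<theta> / Gamma \<theta> * integral {0..1} (\<lambda>t. t powr (\<theta> - 1) * f (x1 - t * h))"
proof -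
  have "continuous_on {0..1} (\<lambda>t. f (x1 - t * h))"
    using h by (intro continuous_on_compose2[OF f] continuous_intros)
               (auto simp: mult_left_le_one_le)
  from set_integrable_powr_mult_continuous[OF \<theta> this]
  have unit: "(LINT t:{0..1}|lborel. t powr (\<theta> - 1) * f (x1 - t * h))
                = integral {0..1} (\<lambda>t. t powr (\<theta> - 1) * f (x1 - t * h))"
    by (rule set_borel_integral_eq_integral)
  have pointwise: "indicator {x1-h..x1} (x1 + - h * t) *\<^sub>R ((x1 - (x1 + - h * t)) powr (\<theta> - 1) * f (x1 + - h * t))
          = h powr (\<theta> - 1) * (indicator {0..1} t *\<^sub>R (t powr (\<theta> - 1) * f (x1 - t * h)))" for t
    using h by (auto simp: indicator_def powr_mult mult.commute zero_le_mult_iff mult_le_cancel_left1)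
  have "(LINT s:{x1-h..x1}|lborel. (x1 - s) powr (\<theta> - 1) * f s)
          = \<bar>- h\<bar> *\<^sub>R (LBINT t. indicator {x1-h..x1} (x1 + - h * t) *\<^sub>R ((x1 - (x1 + - h * t)) powr (\<theta> - 1) * f (x1 + - h * t)))"
    unfolding set_lebesgue_integral_def by (rule lborel_integral_real_affine) (use h in simp)
  also have "\<dots> = h * h powr (\<theta> - 1) * (LINT t:{0..1}|lborel. t powr (\<theta> - 1) * f (x1 - t * h))"
    unfolding pointwise set_lebesgue_integral_def using h by simp
  also have "h * h powr (\<theta> - 1) = h powr \<theta>" using h by (simp add: powr_diff)
  finally show ?thesis unfolding RL_right_def unit by simp
qed

lemma alpha_m_convexD:
  assumes "alpha_m_convex \<alpha> m K g" "X \<in> K" "Y \<in> K" "0 < t" "t \<le> 1"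
    and "t * X + m * (1 - t) * Y \<in> K"
  shows "g (t * X + m * (1 - t) * Y) \<le> t powr \<alpha> * g X + m * (1 - t powr \<alpha>) * g Y"
proof -
  have "g (t * X + m * (1 - t) * Y) \<le> cpow t \<alpha> * g X + m * (1 - cpow t \<alpha>) * g Y"
    using assms unfolding alpha_m_convex_def by auto
  then show ?thesis using \<open>0 < t\<close> unfolding cpow_def by simp
qed

definition frac_defect :: "real \<Rightarrow> real \<Rightarrow> (real \<Rightarrow> real) \<Rightarrow> real \<Rightarrow> real \<Rightarrow> real" where
  "frac_defect \<theta> lam f x0 d = (1 - lam) * f (x0 + d) + lam * f x0
      - \<theta> * integral {0..1} (\<lambda>t. t powr (\<theta> - 1) * f (x0 + t * d))"

lemma frac_defect_estimate:
  fixes f :: "real \<Rightarrow> real" and x0 d \<theta> q \<alpha> m P Q lam :: real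
  assumes \<theta>: "0 < \<theta>" and q: "1 \<le> q" and \<alpha>: "0 \<le> \<alpha>" and m: "0 \<le> m"
    and P: "0 \<le> P" and Q: "0 \<le> Q" and d: "d \<noteq> 0" and lam: "0 < lam" "lam \<le> 1"
    and f: "\<And>t. t \<in> {0..1} \<Longrightarrow> f differentiable at (x0 + t * d)"
    and f'_powr_le: "\<And>t. t \<in> {0<..<1} \<Longrightarrow>
           \<bar>deriv f (x0 + t * d)\<bar> powr q \<le> t powr \<alpha> * P + m * (1 - t powr \<alpha>) * Q"
  shows "\<bar>frac_defect \<theta> lam f x0 d\<bar>
         \<le> \<bar>d\<bar> * A1 \<theta> lam powr (1 - 1/q) * (P * A2 \<alpha> \<theta> lam + m * Q * A3 \<alpha> \<theta> lam) powr (1/q)"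
proof -
  have D: "((\<lambda>t. f (x0 + t * d)) has_real_derivative deriv f (x0 + t * d) * d) (at t)"
    if "t \<in> {0..1}" for t
    using f[OF that] unfolding DERIV_deriv_iff_real_differentiable[symmetric]
    by (auto intro!: derivative_eq_intros DERIV_chain2[where f = f])
  have "continuous_on {0..1} (\<lambda>t. f (x0 + t * d))"
    using D DERIV_isCont by (blast intro: continuous_at_imp_continuous_on)
  from fractional_kernel_estimate[OF \<theta> q \<alpha> m P Q _ lam this D,
      where F = "\<lambda>t. \<bar>deriv f (x0 + t * d)\<bar>" and h = "\<bar>d\<bar>"]
  show ?thesis unfolding frac_defect_def using d f'_powr_le by (simp add: abs_mult)
qed

lemma frac_defect_estimate_alpha_m_convex:
  fixes f :: "real \<Rightarrow> real" and K :: "real set" and \<theta> q \<alpha> m lam Y c :: real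
  assumes \<theta>: "0 < \<theta>" and q: "1 \<le> q" and \<alpha>: "0 \<le> \<alpha>" and m: "0 \<le> m"
    and lam: "0 < lam" "lam \<le> 1"
    and K: "is_interval K" "m * Y \<in> K" "Y \<in> K" "c \<in> K" and c: "c \<noteq> m * Y"
    and f: "\<And>x. x \<in> K \<Longrightarrow> f differentiable at x"
    and convex: "alpha_m_convex \<alpha> m K (\<lambda>x. \<bar>deriv f x\<bar> powr q)"
  shows "\<bar>frac_defect \<theta> lam f (m * Y) (c - m * Y)\<bar>
         \<le> \<bar>c - m * Y\<bar> * A1 \<theta> lam powr (1 - 1/q)
            * (\<bar>deriv f c\<bar> powr q * A2 \<alpha> \<theta> lam + m * \<bar>deriv f Y\<bar> powr q * A3 \<alpha> \<theta> lam) powr (1/q)"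
proof (rule frac_defect_estimate[OF \<theta> q \<alpha> m _ _ _ lam])
  have segment: "m * Y + t * (c - m * Y) \<in> K" if "t \<in> {0..1}" for t
    using convexD[OF is_interval_convex[OF K(1)] K(2,4), of "1 - t" t] that
    by (simp add: algebra_simps)
  then show "f differentiable at (m * Y + t * (c - m * Y))" if "t \<in> {0..1}" for t
    using f that by blast
  fix t :: real assume t: "t \<in> {0<..<1}"
  have "t * c + m * (1 - t) * Y = m * Y + t * (c - m * Y)" by (simp add: algebra_simps)
  then show "\<bar>deriv f (m * Y + t * (c - m * Y))\<bar> powr q
        \<le> t powr \<alpha> * \<bar>deriv f c\<bar> powr q + m * (1 - t powr \<alpha>) * \<bar>deriv f Y\<bar> powr q"
    using alpha_m_convexD[OF convex K(4,3), of t] t segment[of t] by simp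
qed (use c in auto)

lemma Simpson_fractional_split:
  fixes f :: "real \<Rightarrow> real" and u v \<theta> :: real
  assumes uv: "u < v" and \<theta>: "0 < \<theta>" and f: "continuous_on {u..v} f"
  shows "(1/6) * (f u + 4 * f ((u + v) / 2) + f v)
           - Gamma (\<theta> + 1) * 2 powr (\<theta> - 1) / (v - u) powr \<theta>
             * (RL_left \<theta> ((u + v) / 2) f u + RL_right \<theta> ((u + v) / 2) f v)
         = (frac_defect \<theta> (1/3) f u ((v - u) / 2) + frac_defect \<theta> (1/3) f v (- ((v - u) / 2))) / 2"
proof -
  define h where "h = (v - u) / 2"
  have h: "0 < h" and mid: "(u + v) / 2 = u + h" "(u + v) / 2 = v - h" "v + - h = u + h"
    using uv unfolding h_def by (auto simp: field_simps)
  have coef: "Gamma (\<theta> + 1) * 2 powr (\<theta> - 1) / (v - u) powr \<theta> = \<theta> * Gamma \<theta> / (2 * h powr \<theta>)"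
  proof -
    have "(v - u) powr \<theta> = 2 powr \<theta> * h powr \<theta>"
      unfolding h_def using uv by (simp add: powr_divide)
    moreover have "2 powr (\<theta> - 1) = 2 powr \<theta> / 2" by (simp add: powr_diff)
    moreover have "Gamma (\<theta> + 1) = \<theta> * Gamma \<theta>"
      using \<theta> by (intro Gamma_plus1) (auto elim!: nonpos_Ints_cases)
    ultimately show ?thesis using h by (simp add: field_simps)
  qed
  have RL_left: "RL_left \<theta> ((u + v) / 2) f u
      = h powr \<theta> / Gamma \<theta> * integral {0..1} (\<lambda>t. t powr (\<theta> - 1) * f (u + t * h))"
    unfolding mid(1) using mid h by (intro RL_left_eq_integral_unit h \<theta> continuous_on_subset[OF f]) auto
  have RL_right: "RL_right \<theta> ((u + v) / 2) f v
      = h powr \<theta> / Gamma \<theta> * integral {0..1} (\<lambda>t. t powr (\<theta> - 1) * f (v - t * h))"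
    unfolding mid(2) using mid h by (intro RL_right_eq_integral_unit h \<theta> continuous_on_subset[OF f]) auto
  have "0 < Gamma \<theta>" using \<theta> by (rule Gamma_real_pos)
  then show ?thesis
    unfolding coef RL_left RL_right frac_defect_def h_def[symmetric]
    unfolding mid(1,3) using h by (simp add: field_simps)
qed

lemma Simpson_fractional_estimate:
  fixes f :: "real \<Rightarrow> real" and u v \<theta> L R :: real
  assumes uv: "u < v" and \<theta>: "0 < \<theta>" and f: "continuous_on {u..v} f"
    and L: "\<bar>frac_defect \<theta> (1/3) f u ((v - u) / 2)\<bar> \<le> (v - u) / 2 * L"
    and R: "\<bar>frac_defect \<theta> (1/3) f v (- ((v - u) / 2))\<bar> \<le> (v - u) / 2 * R"
  shows "\<bar>(1/6) * (f u + 4 * f ((u + v) / 2) + f v)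
           - Gamma (\<theta> + 1) * 2 powr (\<theta> - 1) / (v - u) powr \<theta>
             * (RL_left \<theta> ((u + v) / 2) f u + RL_right \<theta> ((u + v) / 2) f v)\<bar>
         \<le> (v - u) / 4 * (L + R)"
  unfolding Simpson_fractional_split[OF uv \<theta> f]
  using abs_triangle_ineq[of "frac_defect \<theta> (1/3) f u ((v - u) / 2)"
      "frac_defect \<theta> (1/3) f v (- ((v - u) / 2))"] L R
  by (simp add: field_simps)

theorem mainTheorem5:
  fixes f :: "real \<Rightarrow> real" and I :: "real set"
    and m \<alpha> a b q \<theta> :: real
  assumes "is_interval I" and "I \<subseteq> {0..}"
    and "\<forall>x\<in>interior I. f differentiable (at x)"
    and "0 < m" and "m \<le> 1" and "0 \<le> \<alpha>" and "\<alpha> \<le> 1"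
    and "a < b" and "m * a \<in> interior I" and "b \<in> interior I"
    and "set_integrable lborel {m * a..m * b} (deriv f)"
    and "alpha_m_convex \<alpha> m {m * a..b} (\<lambda>x. \<bar>deriv f x\<bar> powr q)"
    and "1 \<le> q"
    and "0 < \<theta>"
  shows "\<bar>(1/6) * (f (m * a) + 4 * f (m * (a + b) / 2) + f (m * b))
           - Gamma (\<theta> + 1) * 2 powr (\<theta> - 1) / (m powr \<theta> * (b - a) powr \<theta>)
             * (RL_left \<theta> (m * (a + b) / 2) f (m * a) + RL_right \<theta> (m * (a + b) / 2) f (m * b))\<bar>
         \<le> m * (b - a) / 4 * A1 \<theta> (1/3) powr (1 - 1 / q)
           * ((\<bar>deriv f (m * (a + b) / 2)\<bar> powr q * A2 \<alpha> \<theta> (1/3)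
                 + m * \<bar>deriv f a\<bar> powr q * A3 \<alpha> \<theta> (1/3)) powr (1 / q)
            + (\<bar>deriv f (m * (a + b) / 2)\<bar> powr q * A2 \<alpha> \<theta> (1/3)
                 + m * \<bar>deriv f b\<bar> powr q * A3 \<alpha> \<theta> (1/3)) powr (1 / q))"
proof -
  note I = assms(1,2) and m = assms(4,5) and ab = assms(8,9,10) and \<theta> = assms(14)
  define c where "c = m * (a + b) / 2"
  define h where "h = m * (b - a) / 2"
  define K where "K = {m * a..b}"
  define A where "A = A1 \<theta> (1/3) powr (1 - 1/q)"
  define S where "S x = \<bar>deriv f c\<bar> powr q * A2 \<alpha> \<theta> (1/3) + m * \<bar>deriv f x\<bar> powr q * A3 \<alpha> \<theta> (1/3)" for x
  have "0 \<le> m * a" using I ab interior_subset by fastforce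
  then have "0 \<le> a" using m by (simp add: zero_le_mult_iff)
  then have le: "m * a \<le> a" "m * b \<le> b" "0 < h" "c - m * a = h" "c - m * b = - h"
    using m ab mult_left_le_one_le[of a m] mult_left_le_one_le[of b m]
    unfolding c_def h_def by (auto simp: field_simps)
  then have K: "is_interval K" "m * a \<in> K" "m * b \<in> K" "a \<in> K" "b \<in> K" "c \<in> K"
    using ab unfolding K_def by (auto simp: is_interval_cc)
  have "is_interval (interior I)"
    using I by (simp add: is_interval_convex_1 convex_interior)
  then have f: "f differentiable at x" if "x \<in> K" for x
    using assms(3) ab that unfolding K_def is_interval_1 by (meson atLeastAtMost_iff)
  note estimate = frac_defect_estimate_alpha_m_convex[OF \<theta> assms(13,6) less_imp_le[OF m(1)] _ _ K(1)
      _ _ K(6) _ f assms(12)[folded K_def]]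
  have cont: "continuous_on {m * a..m * b} f"
    using f K le unfolding K_def
    by (intro continuous_at_imp_continuous_on) (auto intro: differentiable_imp_continuous_within)
  have left: "\<bar>frac_defect \<theta> (1/3) f (m * a) h\<bar> \<le> h * (A * S a powr (1/q))"
    using estimate[of "1/3" a] K le unfolding A_def S_def by simp
  have right: "\<bar>frac_defect \<theta> (1/3) f (m * b) (- h)\<bar> \<le> h * (A * S b powr (1/q))"
    using estimate[of "1/3" b] K le unfolding A_def S_def by simp
  have lt: "m * a < m * b" using m ab by simp
  have "(m * b - m * a) powr \<theta> = m powr \<theta> * (b - a) powr \<theta>"
    using m ab by (simp add: powr_mult flip: right_diff_distrib)
  then have eqs: "(m * a + m * b) / 2 = c" "(m * b - m * a) / 2 = h" "(m * b - m * a) / 4 = m * (b - a) / 4"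
    "(m * b - m * a) powr \<theta> = m powr \<theta> * (b - a) powr \<theta>"
    unfolding c_def h_def by (simp_all add: field_simps)
  from Simpson_fractional_estimate[OF lt \<theta> cont, where L = "A * S a powr (1/q)" and R = "A * S b powr (1/q)",
      unfolded eqs, OF left right]
  show ?thesis unfolding c_def[symmetric] A_def[symmetric] S_def[symmetric] by (simp only: distrib_left mult.assoc)
qed

end
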